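(* Let $m\ge1$ and work in $\Lambda^{\pm}_m=\mathbb Z[x_1^{\pm1},\dots,x_m^{\pm1}]^{S_m}$. Then: (1) for every $k\in\mathbb Z$, $H_k=h_k-h_k^{(\infty)}$; equivalently $H_k=h_k$ for $k\ge0$, $H_k=0$ for $-m<k<0$, and $H_k=-h^{(\infty)}_k$ for $k\le -m$; (2) for every $k\in\mathbb Z$, $H_k(x_1,\dots,x_m)-x_1H_{k-1}(x_1,\dots,x_m)=H_k(x_2,\dots,x_m)$, where the right-hand side is the corresponding element defined for the $m-1$ variables $x_2,\dots,x_m$; (3) if $m=1$, then $H_k(x_1)-x_1H_{k-1}(x_1)=0$ for every $k\in\mathbb Z$.
   Context: For a sequence of integers $\lambda=(\lambda_1,\dots,\lambda_m)$ define $E_\lambda$ by $E_\lambda(x)\prod_{i<j}(x_i-x_j)=\sum_{\sigma\in S_m}\mathrm{sgn}(\sigma)\sigma(x_1^{\lambda_1+m-1}x_2^{\lambda_2+m-2}\cdots x_m^{\lambda_m})$, and set $H_k=E_{(k,0,\dots,0)}$ for $k\in\mathbb Z$. Define $h_k$ and $h_k^{(\infty)}$ by the expansions of $1/\prod_{i=1}^m(1-x_it)$ at $t=0$ and $t=\infty$: $\frac{1}{\prod_i(1-x_it)}=\sum_{k\ge0}h_kt^k=\sum_{k\le -m}h^{(\infty)}_kt^k$, with $h_k=0$ for $k<0$ and $h_k^{(\infty)}=0$ for $k>-m$. *)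

theory Defs
  imports Complex_Main "HOL-Combinatorics.Permutations"
    "HOL-Computational_Algebra.Formal_Laurent_Series"
begin

text \<open>Laurent polynomials in m variables are rendered as functions of a list xs of
  m complex values (evaluation at a point); indices are 0-based.\<close>

definition vandermonde :: "complex list \<Rightarrow> complex" where
  "vandermonde xs = (\<Prod>i<length xs. \<Prod>j\<in>{i<..<length xs}. (xs ! i - xs ! j))"

definition alternant :: "int list \<Rightarrow> complex list \<Rightarrow> complex" where
  "alternant lam xs = (let m = length xs in
     (\<Sum>\<sigma> | \<sigma> permutes {..<m}. of_int (sign \<sigma>) *
        (\<Prod>i<m. (xs ! (\<sigma> i)) powi (lam ! i + int (m - 1 - i)))))"

definition E :: "int list \<Rightarrow> complex list \<Rightarrow> complex" where
  "E lam xs = alternant lam xs / vandermonde xs"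

definition H :: "int \<Rightarrow> complex list \<Rightarrow> complex" where
  "H k xs = E (k # replicate (length xs - 1) 0) xs"

definition h :: "int \<Rightarrow> complex list \<Rightarrow> complex" where
  "h k xs = fls_nth (inverse (\<Prod>i<length xs. (1 - fls_const (xs ! i) * fls_X))) (k)"

text \<open>h^infinity_k: coefficient of t^k in the expansion of 1/prod(1 - x_i t) at
  t = infinity, computed in Laurent series in s = 1/t (so t = fls_X_inv and
  the coefficient of t^k is the coefficient of s^(-k)).\<close>
definition hinf :: "int \<Rightarrow> complex list \<Rightarrow> complex" where
  "hinf k xs = fls_nth (inverse (\<Prod>i<length xs. (1 - fls_const (xs ! i) * fls_X_inv))) ((-k))"

end

theory Submission
  imports Defs "Jordan_Normal_Form.Determinant"
begin

(* Let D_S(p) = \<Sum>a\<in>S. a^p / \<Prod>b\<in>S-{a}. (a - b) (divdiff_powi S p) be the divided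
   difference of t^p at the nodes S = {x_1, ..., x_m}.  Expanding the alternant along its first
   row, whose minors are Vandermonde determinants, gives H_k = D_S(k + m - 1).  Dividing the
   factor 1 - x_1 t out of the generating series shows that g_k = h_k - h^(inf)_k satisfies
   g_k(x_1..x_m) - x_1 g_(k-1)(x_1..x_m) = g_k(x_2..x_m), and so does D_S(k + m - 1) because
   D_S(p + 1) - c D_S(p) = D_(S-{c})(p).  By induction on m the difference of the two sides
   solves d_k = x_1 d_(k-1), and d_0 = 0 since D_S(m - 1) = 1 = h_0 and h^(inf)_0 = 0.  The
   vanishing ranges of h and h^(inf) come from the lowest degrees of the two series. *)

definition divdiff_powi :: "'a::field set \<Rightarrow> int \<Rightarrow> 'a" where
  "divdiff_powi S p = (\<Sum>a\<in>S. a powi p / (\<Prod>b\<in>S - {a}. a - b))"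

lemma divdiff_powi_singleton: "divdiff_powi {a} p = a powi p"
  unfolding divdiff_powi_def by simp

lemma divdiff_powi_remove:
  assumes "finite S" "c \<in> S" "0 \<notin> S"
  shows "divdiff_powi S (p + 1) - c * divdiff_powi S p = divdiff_powi (S - {c}) p"
proof -
  have prod_remove: "(\<Prod>b\<in>S - {a}. a - b) = (a - c) * (\<Prod>b\<in>S - {c} - {a}. a - b)"
    if "a \<in> S - {c}" for a
  proof -
    have "S - {c} - {a} = S - {a} - {c}" by blast
    then show ?thesis using that assms(1,2) by (subst prod.remove[of _ c]) auto
  qed
  have numerator: "a powi (p + 1) - c * a powi p = a powi p * (a - c)" if "a \<in> S" for a
    using assms(3) that by (subst power_int_add_1) (auto simp: algebra_simps)
  have "divdiff_powi S (p + 1) - c * divdiff_powi S p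
      = (\<Sum>a\<in>S. (a powi (p + 1) - c * a powi p) / (\<Prod>b\<in>S - {a}. a - b))"
    unfolding divdiff_powi_def by (simp add: sum_subtractf sum_distrib_left diff_divide_distrib)
  also have "\<dots> = (\<Sum>a\<in>S. a powi p * (a - c) / (\<Prod>b\<in>S - {a}. a - b))"
    by (intro sum.cong refl) (simp add: numerator)
  also have "\<dots> = (\<Sum>a\<in>S - {c}. a powi p * (a - c) / (\<Prod>b\<in>S - {a}. a - b))"
    using sum.remove[OF assms(1,2), of "\<lambda>a. a powi p * (a - c) / (\<Prod>b\<in>S - {a}. a - b)"]
    by simp
  also have "\<dots> = divdiff_powi (S - {c}) p"
    unfolding divdiff_powi_def
  proof (intro sum.cong refl)
    fix a assume "a \<in> S - {c}"
    then show "a powi p * (a - c) / (\<Prod>b\<in>S - {a}. a - b)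
        = a powi p / (\<Prod>b\<in>S - {c} - {a}. a - b)"
      unfolding prod_remove[OF \<open>a \<in> S - {c}\<close>] by simp
  qed
  finally show ?thesis .
qed

lemma divdiff_powi_of_nat_le:
  assumes "finite S" "card S = Suc n" "0 \<notin> S" "p \<le> n"
  shows "divdiff_powi S (int p) = (if p = n then 1 else 0)"
  using assms
proof (induction n arbitrary: S p)
  case 0
  then obtain a where "S = {a}" by (auto simp: card_Suc_eq)
  then show ?case using 0 by (simp add: divdiff_powi_singleton)
next
  case (Suc n)
  obtain a where a: "a \<in> S"
    using Suc.prems(2) by fastforce
  have "card (S - {a}) = Suc n"
    using Suc.prems(1,2) a by (simp add: card_Diff_singleton)
  then obtain c where "c \<in> S - {a}"
    by (metis all_not_in_conv card.empty nat.distinct(1))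
  then have ac: "a \<in> S" "c \<in> S" "a \<noteq> c"
    using a by auto
  have IH: "divdiff_powi (S - {y}) (int q) = (if q = n then 1 else 0)" if "y \<in> S" "q \<le> n" for y q
    using Suc.IH[of "S - {y}" q] Suc.prems that by (simp add: card_Diff_singleton)
  have divided_difference_rule:
    "(a - c) * divdiff_powi S q = divdiff_powi (S - {c}) q - divdiff_powi (S - {a}) q" for q
    using divdiff_powi_remove[OF Suc.prems(1) ac(1) Suc.prems(3), of q]
      divdiff_powi_remove[OF Suc.prems(1) ac(2) Suc.prems(3), of q]
    by (simp add: algebra_simps)
  have below: "divdiff_powi S (int q) = 0" if "q \<le> n" for q
    using divided_difference_rule[of "int q"] IH[OF ac(1) that] IH[OF ac(2) that] ac(3) by simp
  have "divdiff_powi S (int n + 1) - c * divdiff_powi S (int n) = divdiff_powi (S - {c}) (int n)"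
    by (rule divdiff_powi_remove[OF Suc.prems(1) ac(2) Suc.prems(3)])
  then have "divdiff_powi S (int (Suc n)) = 1"
    using below[of n] IH[OF ac(2), of n] by (simp add: add.commute)
  then show ?case using below Suc.prems(4) by (cases "p = Suc n") auto
qed

definition remove_nth :: "nat \<Rightarrow> 'a list \<Rightarrow> 'a list" where
  "remove_nth j xs = take j xs @ drop (Suc j) xs"

lemma remove_nth_Cons_0 [simp]: "remove_nth 0 (x # xs) = xs"
  unfolding remove_nth_def by simp

lemma remove_nth_Cons_Suc [simp]: "remove_nth (Suc j) (x # xs) = x # remove_nth j xs"
  unfolding remove_nth_def by simp

lemma length_remove_nth [simp]: "j < length xs \<Longrightarrow> length (remove_nth j xs) = length xs - 1"
  unfolding remove_nth_def by simp

lemma nth_remove_nth: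
  "j < length xs \<Longrightarrow> i < length xs - 1 \<Longrightarrow>
    remove_nth j xs ! i = xs ! (if i < j then i else Suc i)"
  unfolding remove_nth_def by (auto simp: nth_append min_def)

lemma
  assumes "distinct xs" "j < length xs"
  shows distinct_remove_nth: "distinct (remove_nth j xs)"
    and set_remove_nth: "set (remove_nth j xs) = set xs - {xs ! j}"
proof -
  have xs: "xs = take j xs @ xs ! j # drop (Suc j) xs"
    using assms(2) by (rule id_take_nth_drop)
  then have "distinct (take j xs @ xs ! j # drop (Suc j) xs)"
    using assms(1) by simp
  moreover have "set xs = set (take j xs) \<union> {xs ! j} \<union> set (drop (Suc j) xs)"
    by (subst xs) auto
  ultimately show "distinct (remove_nth j xs)" "set (remove_nth j xs) = set xs - {xs ! j}"
    unfolding remove_nth_def by auto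
qed

lemma vandermonde_Cons:
  "vandermonde (x # xs) = (\<Prod>l<length xs. x - xs ! l) * vandermonde xs"
  unfolding vandermonde_def length_Cons prod.lessThan_Suc_shift
    atLeastSucLessThan_greaterThanLessThan[symmetric] prod.atLeast_Suc_lessThan_Suc_shift
  by (simp add: atLeast0LessThan)

lemma vandermonde_Cons_distinct:
  "distinct xs \<Longrightarrow> vandermonde (x # xs) = (\<Prod>b\<in>set xs. x - b) * vandermonde xs"
  by (simp add: vandermonde_Cons prod.reindex_bij_betw[OF bij_betw_nth, symmetric])

lemma vandermonde_nonzero: "distinct xs \<Longrightarrow> vandermonde xs \<noteq> 0"
  by (induction xs) (auto simp: vandermonde_def[of "[]"] vandermonde_Cons_distinct)

lemma vandermonde_remove_nth:
  assumes "distinct xs" "j < length xs"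
  shows "vandermonde xs
    = (-1) ^ j * (\<Prod>b\<in>set xs - {xs ! j}. xs ! j - b) * vandermonde (remove_nth j xs)"
  using assms
proof (induction xs arbitrary: j)
  case Nil
  then show ?case by simp
next
  case (Cons x xs)
  show ?case
  proof (cases j)
    case 0
    have "set (x # xs) - {x} = set xs" using Cons.prems by auto
    then show ?thesis using 0 Cons.prems by (simp add: vandermonde_Cons_distinct)
  next
    case (Suc i)
    let ?y = "xs ! i"
    have i: "i < length xs" and y: "?y \<in> set xs" "x \<noteq> ?y"
      using Cons.prems Suc by auto
    have xs_y: "set (remove_nth i xs) = set xs - {?y}" "distinct (remove_nth i xs)"
      using Cons.prems i by (auto simp: set_remove_nth distinct_remove_nth)
    have x_factor: "(\<Prod>b\<in>set xs. x - b) = (x - ?y) * (\<Prod>b\<in>set xs - {?y}. x - b)"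
      using y by (subst prod.remove[of _ ?y]) auto
    have y_factor:
      "(\<Prod>b\<in>set (x # xs) - {?y}. ?y - b) = (?y - x) * (\<Prod>b\<in>set xs - {?y}. ?y - b)"
    proof -
      have "set (x # xs) - {?y} = insert x (set xs - {?y})" using y by auto
      then show ?thesis using Cons.prems by simp
    qed
    have "vandermonde (x # xs) = (\<Prod>b\<in>set xs. x - b) * vandermonde xs"
      using Cons.prems by (simp add: vandermonde_Cons_distinct)
    also have "\<dots> = (x - ?y) * (\<Prod>b\<in>set xs - {?y}. x - b) *
        ((-1) ^ i * (\<Prod>b\<in>set xs - {?y}. ?y - b) * vandermonde (remove_nth i xs))"
      using Cons.IH[of i] Cons.prems i x_factor by simp
    also have "\<dots> = (-1) ^ j * (\<Prod>b\<in>set (x # xs) - {(x # xs) ! j}. (x # xs) ! j - b)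
        * vandermonde (remove_nth j (x # xs))"
      unfolding Suc remove_nth_Cons_Suc vandermonde_Cons_distinct[OF xs_y(2)] nth_Cons_Suc
        y_factor xs_y(1)
      by (simp add: algebra_simps)
    finally show ?thesis .
  qed
qed

definition alternant_mat :: "int \<Rightarrow> complex list \<Rightarrow> complex mat" where
  "alternant_mat k xs = mat (length xs) (length xs)
     (\<lambda>(i, j). xs ! j powi ((if i = 0 then k else 0) + int (length xs - 1 - i)))"

lemma alternant_mat_carrier: "alternant_mat k xs \<in> carrier_mat (length xs) (length xs)"
  unfolding alternant_mat_def by simp

lemma alternant_eq_det:
  "alternant (k # replicate (length xs - 1) 0) xs = det (alternant_mat k xs)"
proof -
  let ?m = "length xs" and ?lam = "k # replicate (length xs - 1) 0"
  have entry: "alternant_mat k xs $$ (i, p i) = xs ! p i powi (?lam ! i + int (?m - 1 - i))"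
    if "p permutes {..<?m}" "i < ?m" for p i
  proof -
    have "p i < ?m" using that by (meson lessThan_iff permutes_in_image)
    moreover have "?lam ! i = (if i = 0 then k else 0)" using that(2) by (cases i) auto
    ultimately show ?thesis unfolding alternant_mat_def using that(2) by simp
  qed
  show ?thesis
    unfolding det_def'[OF alternant_mat_carrier] alternant_def Let_def atLeast0LessThan
    by (intro sum.cong refl) (simp add: entry)
qed

lemma mat_delete_alternant_mat:
  assumes "j < length xs"
  shows "mat_delete (alternant_mat k xs) 0 j = alternant_mat 0 (remove_nth j xs)"
proof (rule eq_matI)
  fix i' j' assume "i' < dim_row (alternant_mat 0 (remove_nth j xs))"
    and "j' < dim_col (alternant_mat 0 (remove_nth j xs))"
  then have "i' < length xs - 1" "j' < length xs - 1"
    using assms by (auto simp: alternant_mat_def)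
  then show "mat_delete (alternant_mat k xs) 0 j $$ (i', j')
      = alternant_mat 0 (remove_nth j xs) $$ (i', j')"
    unfolding mat_delete_def alternant_mat_def using assms
    by (simp add: nth_remove_nth del: power_int_of_nat)
qed (use assms in \<open>simp_all add: alternant_mat_def\<close>)

lemma det_alternant_mat:
  assumes "distinct xs" "0 \<notin> set xs" "length xs = Suc n"
  shows "det (alternant_mat k xs) = vandermonde xs * divdiff_powi (set xs) (k + int n)"
  using assms
proof (induction n arbitrary: xs k)
  case 0
  then obtain x where x: "xs = [x]"
    by (metis length_0_conv length_Suc_conv)
  show ?case
    using laplace_expansion_row[OF alternant_mat_carrier[of k xs], of 0]
    by (simp add: x cofactor_def alternant_mat_def mat_delete_def vandermonde_def
        divdiff_powi_singleton)
next
  case (Suc n)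
  let ?A = "alternant_mat k xs" and ?S = "set xs"
  have cofactor_term: "?A $$ (0, j) * cofactor ?A 0 j
      = vandermonde xs * (xs ! j powi (k + int (Suc n)) / (\<Prod>b\<in>?S - {xs ! j}. xs ! j - b))"
    if j: "j < length xs" for j
  proof -
    let ?ys = "remove_nth j xs"
    have ys: "distinct ?ys" "set ?ys = ?S - {xs ! j}" "length ?ys = Suc n"
      using Suc.prems j by (simp_all add: distinct_remove_nth set_remove_nth)
    then have "card (set ?ys) = Suc n" by (metis distinct_card)
    then have minor: "det (alternant_mat 0 ?ys) = vandermonde ?ys"
      using Suc.IH[of ?ys 0] ys Suc.prems(2) divdiff_powi_of_nat_le[of "set ?ys" n n] by auto
    have "(\<Prod>b\<in>?S - {xs ! j}. xs ! j - b) \<noteq> 0" by simp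
    then show ?thesis
      unfolding vandermonde_remove_nth[OF Suc.prems(1) j] cofactor_def
        mat_delete_alternant_mat[OF j] minor
      using j Suc.prems(3) by (simp add: alternant_mat_def field_simps)
  qed
  have "det ?A = (\<Sum>j<length xs. ?A $$ (0, j) * cofactor ?A 0 j)"
    using laplace_expansion_row[OF alternant_mat_carrier[of k xs], of 0] Suc.prems(3) by simp
  also have "\<dots> = vandermonde xs *
      (\<Sum>j<length xs. xs ! j powi (k + int (Suc n)) / (\<Prod>b\<in>?S - {xs ! j}. xs ! j - b))"
    by (simp add: cofactor_term sum_distrib_left)
  also have "\<dots> = vandermonde xs * divdiff_powi ?S (k + int (Suc n))"
    unfolding divdiff_powi_def
      sum.reindex_bij_betw[OF bij_betw_nth[OF Suc.prems(1) refl refl], symmetric] ..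
  finally show ?case .
qed

lemma H_eq_divdiff_powi:
  assumes "distinct xs" "0 \<notin> set xs" "xs \<noteq> []"
  shows "H k xs = divdiff_powi (set xs) (k + int (length xs) - 1)"
proof -
  obtain n where n: "length xs = Suc n"
    using assms(3) by (cases xs) auto
  have "H k xs = det (alternant_mat k xs) / vandermonde xs"
    unfolding H_def E_def alternant_eq_det ..
  then show ?thesis
    using det_alternant_mat[OF assms(1,2) n] vandermonde_nonzero[OF assms(1)] n by simp
qed

definition prod_one_minus_X :: "'a::field list \<Rightarrow> 'a fls" where
  "prod_one_minus_X xs = (\<Prod>i<length xs. (1 - fls_const (xs ! i) * fls_X))"

definition prod_one_minus_X_inv :: "'a::field list \<Rightarrow> 'a fls" where
  "prod_one_minus_X_inv xs = (\<Prod>i<length xs. (1 - fls_const (xs ! i) * fls_X_inv))"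

lemma prod_one_minus_X_Cons:
  "prod_one_minus_X (x # xs) = (1 - fls_const x * fls_X) * prod_one_minus_X xs"
  unfolding prod_one_minus_X_def length_Cons prod.lessThan_Suc_shift by simp

lemma prod_one_minus_X_inv_Cons:
  "prod_one_minus_X_inv (x # xs) = (1 - fls_const x * fls_X_inv) * prod_one_minus_X_inv xs"
  unfolding prod_one_minus_X_inv_def length_Cons prod.lessThan_Suc_shift by simp

lemma one_minus_X_nonzero: "1 - fls_const (c::'a::field) * fls_X \<noteq> 0"
proof -
  have "fls_nth (1 - fls_const c * fls_X) 0 = 1" by simp
  then show ?thesis by (metis fls_zero_nth one_neq_zero)
qed

lemma one_minus_X_inv_nonzero: "1 - fls_const (c::'a::field) * fls_X_inv \<noteq> 0"
proof -
  have "fls_nth (1 - fls_const c * fls_X_inv) 0 = 1" by simp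
  then show ?thesis by (metis fls_zero_nth one_neq_zero)
qed

lemma subdegree_prod_one_minus_X:
  fixes xs :: "'a::field_char_0 list"
  shows "fls_subdegree (prod_one_minus_X xs) = 0"
proof -
  have "fls_subdegree (1 - fls_const c * fls_X) = 0" for c :: 'a
    by (rule fls_subdegree_eqI) auto
  then show ?thesis
    unfolding prod_one_minus_X_def by (subst fls_subdegree_prod) (use one_minus_X_nonzero in auto)
qed

lemma subdegree_prod_one_minus_X_inv:
  fixes xs :: "'a::field_char_0 list"
  assumes "0 \<notin> set xs"
  shows "fls_subdegree (prod_one_minus_X_inv xs) = - int (length xs)"
proof -
  have "fls_subdegree (1 - fls_const (xs ! i) * fls_X_inv) = -1" if "i < length xs" for i
    using assms nth_mem[OF that] by (intro fls_subdegree_eqI) auto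
  then show ?thesis
    unfolding prod_one_minus_X_inv_def
    by (subst fls_subdegree_prod) (use one_minus_X_inv_nonzero in auto)
qed

lemma h_eq_0_if_neg: "k < 0 \<Longrightarrow> h k xs = 0"
  unfolding h_def prod_one_minus_X_def[symmetric] by (simp add: subdegree_prod_one_minus_X)

lemma hinf_eq_0_if_gt: "0 \<notin> set xs \<Longrightarrow> - int (length xs) < k \<Longrightarrow> hinf k xs = 0"
  unfolding hinf_def prod_one_minus_X_inv_def[symmetric]
  by (simp add: subdegree_prod_one_minus_X_inv)

lemma h_Cons: "h k (x # xs) - x * h (k - 1) (x # xs) = h k xs"
proof -
  let ?G = "inverse (prod_one_minus_X (x # xs))"
  have "inverse (prod_one_minus_X xs) = ?G * (1 - fls_const x * fls_X)"
    using one_minus_X_nonzero[of x] unfolding prod_one_minus_X_Cons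
    by (simp add: inverse_mult_distrib mult.assoc)
  also have "\<dots> = ?G - fls_const x * (?G * fls_X)"
    by (simp add: algebra_simps)
  finally have "fls_nth (inverse (prod_one_minus_X xs)) k
      = fls_nth (?G - fls_const x * (?G * fls_X)) k"
    by simp
  then show ?thesis
    unfolding h_def prod_one_minus_X_def[symmetric] by (simp add: fls_X_times_conv_shift)
qed

lemma hinf_Cons: "hinf k (x # xs) - x * hinf (k - 1) (x # xs) = hinf k xs"
proof -
  let ?G = "inverse (prod_one_minus_X_inv (x # xs))"
  have "inverse (prod_one_minus_X_inv xs) = ?G * (1 - fls_const x * fls_X_inv)"
    using one_minus_X_inv_nonzero[of x] unfolding prod_one_minus_X_inv_Cons
    by (simp add: inverse_mult_distrib mult.assoc)
  also have "\<dots> = ?G - fls_const x * (?G * fls_X_inv)"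
    by (simp add: algebra_simps)
  finally have "fls_nth (inverse (prod_one_minus_X_inv xs)) (- k)
      = fls_nth (?G - fls_const x * (?G * fls_X_inv)) (- k)"
    by simp
  then show ?thesis
    unfolding hinf_def prod_one_minus_X_inv_def[symmetric] by (simp add: fls_X_inv_times_conv_shift)
qed

lemma h_0: "h 0 xs = 1"
proof (induction xs)
  case Nil
  then show ?case by (simp add: h_def)
next
  case (Cons x xs)
  then show ?case using h_Cons[of 0 x xs] by (simp add: h_eq_0_if_neg)
qed

lemma h_minus_hinf_Nil: "h k [] - hinf k [] = 0"
  by (simp add: h_def hinf_def)

lemma eq_powi_mult_if_recurrence:
  fixes d :: "int \<Rightarrow> 'a::field"
  assumes "x \<noteq> 0" and rec: "\<And>k. d k = x * d (k - 1)"
  shows "d k = x powi k * d 0"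
proof (induction k rule: int_induct[where k = 0])
  case base
  then show ?case by simp
next
  case (step1 i)
  then show ?case using rec[of "i + 1"] assms(1) by (simp add: power_int_add_1)
next
  case (step2 i)
  then show ?case using rec[of i] assms(1) by (simp add: power_int_diff field_simps)
qed

lemma h_minus_hinf_eq_divdiff_powi:
  assumes "distinct xs" "0 \<notin> set xs"
  shows "h k xs - hinf k xs = divdiff_powi (set xs) (k + int (length xs) - 1)"
  using assms
proof (induction xs arbitrary: k)
  case Nil
  then show ?case by (simp add: h_minus_hinf_Nil divdiff_powi_def)
next
  case (Cons x xs)
  let ?S = "set (x # xs)" and ?n = "length xs"
  define d where "d k = divdiff_powi ?S (k + int ?n) - (h k (x # xs) - hinf k (x # xs))" for k
  have x: "x \<noteq> 0" and S: "?S - {x} = set xs" "card ?S = Suc ?n"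
    using Cons.prems by (auto simp: distinct_card)
  have recurrence: "d k = x * d (k - 1)" for k
  proof -
    have "divdiff_powi ?S (k + int ?n) - x * divdiff_powi ?S (k - 1 + int ?n)
        = divdiff_powi (set xs) (k - 1 + int ?n)"
      using divdiff_powi_remove[of ?S x "k - 1 + int ?n"] Cons.prems S(1) by simp
    then show ?thesis
      using Cons.IH[of k] Cons.prems h_Cons[of k x xs] hinf_Cons[of k x xs]
      unfolding d_def by (simp add: algebra_simps)
  qed
  have "d 0 = 0"
    using divdiff_powi_of_nat_le[of ?S ?n ?n] S(2) Cons.prems
    by (simp add: d_def h_0 hinf_eq_0_if_gt)
  then have "d k = 0"
    using eq_powi_mult_if_recurrence[of x d k, OF x recurrence] by simp
  then show ?case
    unfolding d_def by simp
qed

lemma H_eq_h_minus_hinf: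
  assumes "distinct xs" "0 \<notin> set xs" "xs \<noteq> []"
  shows "H k xs = h k xs - hinf k xs"
  using H_eq_divdiff_powi[OF assms] h_minus_hinf_eq_divdiff_powi[OF assms(1,2)] by simp

lemma H_Cons:
  assumes "distinct (x # xs)" "0 \<notin> set (x # xs)"
  shows "H k (x # xs) - x * H (k - 1) (x # xs) = h k xs - hinf k xs"
proof -
  have "H k (x # xs) - x * H (k - 1) (x # xs)
      = (h k (x # xs) - x * h (k - 1) (x # xs)) - (hinf k (x # xs) - x * hinf (k - 1) (x # xs))"
    unfolding H_eq_h_minus_hinf[OF assms list.simps(3)] by (simp add: algebra_simps)
  then show ?thesis
    unfolding h_Cons hinf_Cons .
qed

theorem mainTheorem2:
  fixes xs :: "complex list"
  assumes "length xs \<ge> 1" and "distinct xs" and "0 \<notin> set xs"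
  shows "(\<forall>k::int. H k xs = h k xs - hinf k xs)
    \<and> (\<forall>k::int. k \<ge> 0 \<longrightarrow> H k xs = h k xs)
    \<and> (\<forall>k::int. - int (length xs) < k \<and> k < 0 \<longrightarrow> H k xs = 0)
    \<and> (\<forall>k::int. k \<le> - int (length xs) \<longrightarrow> H k xs = - hinf k xs)
    \<and> (length xs \<ge> 2 \<longrightarrow>
        (\<forall>k::int. H k xs - xs ! 0 * H (k - 1) xs = H k (tl xs)))
    \<and> (length xs = 1 \<longrightarrow> (\<forall>k::int. H k xs - xs ! 0 * H (k - 1) xs = 0))"
proof -
  obtain x ys where xs: "xs = x # ys"
    using assms(1) by (cases xs) auto
  have H: "H k xs = h k xs - hinf k xs" for k
    using H_eq_h_minus_hinf[OF assms(2,3)] xs by simp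
  have rec: "H k xs - xs ! 0 * H (k - 1) xs = h k ys - hinf k ys" for k
    using H_Cons[of x ys k] assms(2,3) xs by simp
  show ?thesis
  proof (intro conjI allI impI)
    show "H k xs = h k xs - hinf k xs" for k
      by (rule H)
    show "H k xs = h k xs" if "0 \<le> k" for k
      using hinf_eq_0_if_gt[OF assms(3), of k] that assms(1) by (simp add: H)
    show "H k xs = 0" if "- int (length xs) < k \<and> k < 0" for k
      using hinf_eq_0_if_gt[OF assms(3), of k] h_eq_0_if_neg[of k xs] that by (simp add: H)
    show "H k xs = - hinf k xs" if "k \<le> - int (length xs)" for k
      using h_eq_0_if_neg[of k xs] that assms(1) by (simp add: H)
    show "H k xs - xs ! 0 * H (k - 1) xs = H k (tl xs)" if "2 \<le> length xs" for k
      using H_eq_h_minus_hinf[of ys k] rec[of k] assms(2,3) that xs by (cases ys) auto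
    show "H k xs - xs ! 0 * H (k - 1) xs = 0" if "length xs = 1" for k
      using h_minus_hinf_Nil[of k] rec[of k] that xs by simp
  qed
qed

end
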